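(* Let $X$ and $Y$ be real Hilbert spaces with $X \neq \{0\}$, let $a$ and $b$ be continuous bilinear forms on $X \times Y$, and let $A, B : X \to Y$ be continuous linear operators. Suppose there are constants $C_1 > 0$ and $C_2 \geq 0$ such that for all $u \in X$: $$b(u, B u) + a(u, A u) \geq \frac{1}{C_1} \| u\|^2,$$ $$b(u, A u) \geq 0, \qquad |a(u, B u)| \leq C_2\, a(u, Au).$$ Then $b+a$ satisfies an inf-sup condition on $X \times Y$: there exists $c > 0$ such that $$\inf_{u \in X\setminus\{0\}} \ \sup_{v \in Y\setminus\{0\}} \frac{|(b+a)(u,v)|}{\| u \| \, \|v\| } \geq c.$$ *)

theory Defs
  imports "HOL-Analysis.Analysis"
begin

end

theory Submission
  imports Defs
begin

text \<open>Test with \<open>v = B u + (1 + C\<^sub>2) A u\<close>: then \<open>(b + a)(u, v)\<close> is the coercive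
  expression \<open>b(u, B u) + a(u, A u)\<close> plus the two nonnegative terms
  \<open>a(u, B u) + C\<^sub>2 a(u, A u)\<close> and \<open>(1 + C\<^sub>2) b(u, A u)\<close>, so it is at least \<open>\<parallel>u\<parallel>\<^sup>2 / C\<^sub>1\<close>,
  while \<open>\<parallel>v\<parallel> \<le> K \<parallel>u\<parallel>\<close>. Hence the inf-sup constant is at least \<open>1 / (C\<^sub>1 K)\<close>.\<close>

lemma bounded_bilinear_add:
  assumes f: "bounded_bilinear f" and g: "bounded_bilinear g"
  shows "bounded_bilinear (\<lambda>x y. f x y + g x y)"
proof -
  obtain Kf where Kf: "\<And>x y. norm (f x y) \<le> norm x * norm y * Kf"
    using bounded_bilinear.bounded[OF f] by blast
  obtain Kg where Kg: "\<And>x y. norm (g x y) \<le> norm x * norm y * Kg"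
    using bounded_bilinear.bounded[OF g] by blast
  have "norm (f x y + g x y) \<le> norm x * norm y * (Kf + Kg)" for x y
    using norm_triangle_ineq[of "f x y" "g x y"] Kf[of x y] Kg[of x y]
    by (simp add: distrib_left)
  then show ?thesis
    by unfold_locales
      (auto simp: bounded_bilinear.add_left[OF f] bounded_bilinear.add_left[OF g]
        bounded_bilinear.add_right[OF f] bounded_bilinear.add_right[OF g]
        bounded_bilinear.scaleR_left[OF f] bounded_bilinear.scaleR_left[OF g]
        bounded_bilinear.scaleR_right[OF f] bounded_bilinear.scaleR_right[OF g]
        scaleR_right_distrib)
qed

lemma inf_sup_ge_if_test_vectors:
  fixes f :: "'a::real_normed_vector \<Rightarrow> 'b::real_normed_vector \<Rightarrow> real"
  assumes f: "bounded_bilinear f" and nontriv: "\<exists>x::'a. x \<noteq> 0"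
    and test: "\<And>u. u \<noteq> 0 \<Longrightarrow> \<exists>v. v \<noteq> 0 \<and> c * (norm u * norm v) \<le> \<bar>f u v\<bar>"
  shows "c \<le> (INF u\<in>UNIV - {0}. SUP v\<in>UNIV - {0}. \<bar>f u v\<bar> / (norm u * norm v))"
proof (rule cINF_greatest)
  show "UNIV - {0} \<noteq> ({} :: 'a set)" using nontriv by blast
next
  fix u :: 'a
  assume "u \<in> UNIV - {0}"
  then have u: "u \<noteq> 0" by simp
  obtain K where K: "\<And>x y. norm (f x y) \<le> norm x * norm y * K"
    using bounded_bilinear.bounded[OF f] by blast
  have "bdd_above ((\<lambda>v. \<bar>f u v\<bar> / (norm u * norm v)) ` (UNIV - {0}))"
  proof (rule bdd_aboveI2)
    fix v :: 'b
    assume "v \<in> UNIV - {0}"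
    with u have "norm u * norm v > 0" by simp
    then show "\<bar>f u v\<bar> / (norm u * norm v) \<le> K"
      using K[of u v] by (simp add: divide_le_eq mult.commute)
  qed
  moreover obtain v where "v \<noteq> 0" and "c * (norm u * norm v) \<le> \<bar>f u v\<bar>"
    using test[OF u] by blast
  moreover from this u have "c \<le> \<bar>f u v\<bar> / (norm u * norm v)"
    by (simp add: le_divide_eq)
  ultimately show "c \<le> (SUP v\<in>UNIV - {0}. \<bar>f u v\<bar> / (norm u * norm v))"
    by (intro cSUP_upper2) auto
qed

lemma test_direction_lower_bound:
  assumes a: "bounded_bilinear a" and b: "bounded_bilinear b"
    and C2_nonneg: "C2 \<ge> 0"
    and coer: "b u (B u) + a u (A u) \<ge> (1 / C1) * (norm u)\<^sup>2"
    and bA: "b u (A u) \<ge> 0"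
    and aB: "\<bar>a u (B u)\<bar> \<le> C2 * a u (A u)"
  shows "(1 / C1) * (norm u)\<^sup>2
    \<le> b u (B u + (1 + C2) *\<^sub>R A u) + a u (B u + (1 + C2) *\<^sub>R A u)"
proof -
  have "b u (B u + (1 + C2) *\<^sub>R A u) + a u (B u + (1 + C2) *\<^sub>R A u)
      = (b u (B u) + a u (A u)) + (a u (B u) + C2 * a u (A u)) + (1 + C2) * b u (A u)"
    by (simp add: bounded_bilinear.add_right[OF a] bounded_bilinear.add_right[OF b]
        bounded_bilinear.scaleR_right[OF a] bounded_bilinear.scaleR_right[OF b] algebra_simps)
  moreover have "a u (B u) + C2 * a u (A u) \<ge> 0" using aB by linarith
  moreover have "(1 + C2) * b u (A u) \<ge> 0" using bA C2_nonneg by simp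
  ultimately show ?thesis using coer by linarith
qed

theorem proposition2:
  fixes a b :: "'x::{real_inner,complete_space} \<Rightarrow> 'y::{real_inner,complete_space} \<Rightarrow> real"
    and A B :: "'x \<Rightarrow> 'y"
    and C1 C2 :: real
  assumes X_nontriv: "\<exists>x::'x. x \<noteq> 0"
    and a_bil: "bounded_bilinear a" and b_bil: "bounded_bilinear b"
    and A_lin: "bounded_linear A" and B_lin: "bounded_linear B"
    and C1_pos: "C1 > 0" and C2_nonneg: "C2 \<ge> 0"
    and coer: "\<And>u. b u (B u) + a u (A u) \<ge> (1 / C1) * (norm u)\<^sup>2"
    and bA: "\<And>u. b u (A u) \<ge> 0"
    and aB: "\<And>u. \<bar>a u (B u)\<bar> \<le> C2 * a u (A u)"
  shows "\<exists>c>0. (INF u\<in>UNIV - {0}. SUP v\<in>UNIV - {0}.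
              \<bar>b u v + a u v\<bar> / (norm u * norm v)) \<ge> c"
proof -
  define T where "T u = B u + (1 + C2) *\<^sub>R A u" for u
  have "bounded_linear T"
    unfolding T_def using A_lin B_lin
    by (intro bounded_linear_add bounded_linear_compose[OF bounded_linear_scaleR_right])
  then obtain K where K: "K > 0" "\<And>u. norm (T u) \<le> norm u * K"
    using bounded_linear.pos_bounded by blast
  have low: "(1 / C1) * (norm u)\<^sup>2 \<le> b u (T u) + a u (T u)" for u
    unfolding T_def using test_direction_lower_bound[OF a_bil b_bil C2_nonneg coer bA aB] .
  have "\<exists>v. v \<noteq> 0 \<and> 1 / (C1 * K) * (norm u * norm v) \<le> \<bar>b u v + a u v\<bar>"
    if u: "u \<noteq> 0" for u
  proof (intro exI conjI)
    have pos: "(1 / C1) * (norm u)\<^sup>2 > 0" using u C1_pos by simp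
    with low[of u] show "T u \<noteq> 0"
      by (auto simp: bounded_bilinear.zero_right[OF a_bil] bounded_bilinear.zero_right[OF b_bil])
    have "1 / (C1 * K) * (norm u * norm (T u)) \<le> 1 / (C1 * K) * (norm u * (norm u * K))"
      using K(2)[of u] K(1) C1_pos by (intro mult_left_mono) auto
    also have "\<dots> = (1 / C1) * (norm u)\<^sup>2"
      using K(1) by (simp add: power2_eq_square)
    finally show "1 / (C1 * K) * (norm u * norm (T u)) \<le> \<bar>b u (T u) + a u (T u)\<bar>"
      using low[of u] by linarith
  qed
  then have "1 / (C1 * K) \<le> (INF u\<in>UNIV - {0}. SUP v\<in>UNIV - {0}.
              \<bar>b u v + a u v\<bar> / (norm u * norm v))"
    by (intro inf_sup_ge_if_test_vectors[OF bounded_bilinear_add[OF b_bil a_bil] X_nontriv])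
  moreover have "1 / (C1 * K) > 0" using C1_pos K(1) by simp
  ultimately show ?thesis by blast
qed

end
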